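(* Let $a\in(0,1]$, $b>1$, $c\in(0,+\infty)$, and let $\underline F:[0,\infty)\to[0,\infty)$ be defined by $\underline F(s)=c|s^a-1|^{1/a}$ for $s\in[1/b,b]$, $\underline F(s)=\underline F(b)+\kappa(s-b)$ for $s\ge b$, where $\kappa$ is the left derivative at $b$ of $s\mapsto c|s^a-1|^{1/a}$, and $\underline F(s)=s\,\underline F(1/s)$ for $0<s\le 1/b$ (extended by continuity at $0$), so that $\underline F\in\Gamma_0^s(\mathbb{R}_+)$ is linear on $[0,1/b]$ and on $[b,\infty)$. Then for every $s\ge0$, $$\lim_{n\to\infty}T_a^{(n)}(\underline F)(s)=c|s^a-1|^{1/a}.$$
   Context: $\Gamma_0(\mathbb{R}_+)$ is the set of functions $F:[0,\infty)\to[0,\infty]$ that are convex, lower semicontinuous, with $F(1)=0$. For $F\in\Gamma_0(\mathbb{R}_+)$: $\mathrm{rec}(F)(r)=\lim_{\alpha\to\infty}F(1+\alpha r)/\alpha$, $F'_\infty:=\mathrm{rec}(F)(1)$; the perspective function is $\hat F(r,t)=tF(r/t)$ for $t>0$, $\hat F(r,0)=\mathrm{rec}(F)(r)$; the reverse entropy is $R(s)=sF(1/s)$ for $s>0$, $R(0)=F'_\infty$. $\Gamma_0^s(\mathbb{R}_+)$ is the set of $F\in\Gamma_0(\mathbb{R}_+)$ with $F=R$. The marginal perspective function $H_F$ is the lower semicontinuous envelope of $\tilde H_F(r_1,r_2)=\inf_{\theta>0}[\hat F(\theta,r_1)+\hat F(\theta,r_2)]$. For $a\in(0,1]$, $T_a:\Gamma_0(\mathbb{R}_+)\to\Gamma_0^s(\mathbb{R}_+)$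 is $T_a(F)(s)=2^{1/a-1}H_F(1,s)$, and $T_a^{(n)}$ is its $n$-th iterate. *)

theory Defs
  imports "HOL-Analysis.Analysis"
begin

text \<open>Entropy functions F : [0,\<infinity>) \<rightarrow> [0,\<infinity>] are represented as real \<Rightarrow> ereal;
  only their values on [0,\<infinity>) are ever used.\<close>

definition recF :: "(real \<Rightarrow> ereal) \<Rightarrow> real \<Rightarrow> ereal" where
  "recF F r = Lim at_top (\<lambda>\<alpha>::real. F (1 + \<alpha> * r) / ereal \<alpha>)"

definition persp :: "(real \<Rightarrow> ereal) \<Rightarrow> real \<Rightarrow> real \<Rightarrow> ereal" where
  "persp F r t = (if t > 0 then ereal t * F (r / t) else recF F r)"

definition tildeH :: "(real \<Rightarrow> ereal) \<Rightarrow> real \<times> real \<Rightarrow> ereal" where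
  "tildeH F p = (INF \<theta>\<in>{0<..}. persp F \<theta> (fst p) + persp F \<theta> (snd p))"

text \<open>Lower semicontinuous envelope of tildeH on [0,\<infinity>) x [0,\<infinity>):
  value at x is min (tildeH x) (liminf of tildeH at x within the domain).\<close>
definition HF :: "(real \<Rightarrow> ereal) \<Rightarrow> real \<Rightarrow> real \<Rightarrow> ereal" where
  "HF F r1 r2 = min (tildeH F (r1, r2))
      (Liminf (at (r1, r2) within ({0..} \<times> {0..})) (tildeH F))"

definition Ta :: "real \<Rightarrow> (real \<Rightarrow> ereal) \<Rightarrow> (real \<Rightarrow> ereal)" where
  "Ta a F = (\<lambda>s. ereal (2 powr (1 / a - 1)) * HF F 1 s)"

definition gpow :: "real \<Rightarrow> real \<Rightarrow> real \<Rightarrow> real" where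
  "gpow a c s = c * \<bar>s powr a - 1\<bar> powr (1 / a)"

definition kappa :: "real \<Rightarrow> real \<Rightarrow> real \<Rightarrow> real" where
  "kappa a b c = (THE k. (gpow a c has_real_derivative k) (at_left b))"

definition Fup :: "real \<Rightarrow> real \<Rightarrow> real \<Rightarrow> real \<Rightarrow> real" where
  "Fup a b c s = gpow a c b + kappa a b c * (s - b)"

definition Flow :: "real \<Rightarrow> real \<Rightarrow> real \<Rightarrow> real \<Rightarrow> real" where
  "Flow a b c s =
     (if s \<ge> b then Fup a b c s
      else if s \<ge> 1 / b then gpow a c s
      else if s > 0 then s * Fup a b c (1 / s)
      else Lim (at_right 0) (\<lambda>t. t * Fup a b c (1 / t)))"

end

theory Submission
  imports Defs
begin

(* Write g = gpow a c. For a <= 1 it is convex on (0, oo): its derivative is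
   D(y) = c * phi(1 - y^-a) with phi(u) = sgn u * |u|^(1/a - 1) increasing.
   Flow a b c agrees with g on [1/b, b] and continues affinely outside, so every tangent of g
   at a point y of [1/b, b] supports it.  Adding the tangents at y0 and y1 with
   D(y0) + D(y1) = 0 makes the dependence on theta cancel in the perspective sum, which gives the
   linear minorant r1 A(y0) + r2 A(y1) of tildeH (A(y) = g(y) - y D(y) is the intercept); being
   continuous it also bounds the lower semicontinuous envelope HF.  For every t >= 0 one can pick
   y0, y1 and a theta attaining this bound at (1, t), and the resulting value
   2^(1/a - 1) (A(y0) + t A(y1)) is Flow a b' c t with b'^a = 2 b^a - 1.  Hence the n-th iterate is
   Flow a b_n c with b_n^a = 1 + 2^n (b^a - 1) -> oo; it equals g on [1/b_n, b_n], and at 0 it is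
   D(b_n) -> c = g(0). *)

section \<open>Signed powers and supporting lines\<close>

definition sgn_powr :: "real \<Rightarrow> real \<Rightarrow> real" where
  "sgn_powr q u = sgn u * \<bar>u\<bar> powr q"

lemma sgn_powr_minus [simp]: "sgn_powr q (- u) = - sgn_powr q u"
  by (simp add: sgn_powr_def)

lemma sgn_powr_pos: "0 < u \<Longrightarrow> sgn_powr q u = u powr q"
  by (simp add: sgn_powr_def)

lemma sgn_powr_scale: "0 < l \<Longrightarrow> sgn_powr q (l * u) = l powr q * sgn_powr q u"
  by (simp add: sgn_powr_def sgn_mult abs_mult powr_mult)

lemma sgn_powr_mult_self: "sgn_powr q u * u = \<bar>u\<bar> powr (q + 1)"
  by (cases u "0::real" rule: linorder_cases) (simp_all add: sgn_powr_def powr_add)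

lemma sgn_powr_mono: "0 \<le> q \<Longrightarrow> u \<le> v \<Longrightarrow> sgn_powr q u \<le> sgn_powr q v"
  by (cases u "0::real" rule: linorder_cases; cases v "0::real" rule: linorder_cases)
     (auto simp: sgn_powr_def powr_mono2 intro: order_trans[of _ 0])

lemma powr_le_powr_iff:
  fixes x y a :: real
  assumes "0 < a" "0 \<le> x" "0 \<le> y"
  shows "x powr a \<le> y powr a \<longleftrightarrow> x \<le> y"
  using assms powr_mono2[of a x y] powr_less_mono2[of a y x] by (auto simp: not_le[symmetric])

lemma DERIV_nonneg_imp_increasing_except:
  fixes f f' :: "real \<Rightarrow> real"
  assumes "u \<le> v" and cont: "continuous_on {u..v} f"
    and deriv: "\<And>z. u < z \<Longrightarrow> z < v \<Longrightarrow> z \<noteq> p \<Longrightarrow> (f has_real_derivative f' z) (at z) \<and> 0 \<le> f' z"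
  shows "f u \<le> f v"
proof -
  have deriv': "\<exists>y. (f has_real_derivative y) (at z) \<and> 0 \<le> y" if "u < z" "z < v" "z \<noteq> p" for z
    using deriv[OF that] by blast
  show ?thesis
  proof (cases "u < p \<and> p < v")
    case True
    have "f u \<le> f p"
      by (rule DERIV_nonneg_imp_increasing_open[of u p])
         (use True deriv' in \<open>auto intro: continuous_on_subset[OF cont]\<close>)
    also have "f p \<le> f v"
      by (rule DERIV_nonneg_imp_increasing_open[of p v])
         (use True deriv' in \<open>auto intro: continuous_on_subset[OF cont]\<close>)
    finally show ?thesis .
  next
    case False
    show ?thesis
      by (rule DERIV_nonneg_imp_increasing_open[OF \<open>u \<le> v\<close> _ cont]) (use False deriv' in force)
  qed
qed

lemma mono_deriv_imp_above_tangent: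
  fixes f f' :: "real \<Rightarrow> real"
  assumes S: "is_interval S" and cont: "continuous_on S f"
    and deriv: "\<And>z. z \<in> S \<Longrightarrow> z \<noteq> p \<Longrightarrow> (f has_real_derivative f' z) (at z)"
    and mono: "\<And>y z. y \<in> S \<Longrightarrow> z \<in> S \<Longrightarrow> y \<le> z \<Longrightarrow> f' y \<le> f' z"
    and xy: "x \<in> S" "y \<in> S"
  shows "f y + f' y * (x - y) \<le> f x"
proof -
  define h where "h z = f z - f' y * z" for z
  have sub: "{u..v} \<subseteq> S" if "u \<in> S" "v \<in> S" for u v
    by (rule subsetI, rule mem_is_interval_1_I[OF S that]) auto
  have cont_h: "continuous_on {u..v} h" if "u \<in> S" "v \<in> S" for u v
    unfolding h_def by (intro continuous_intros continuous_on_subset[OF cont sub[OF that]])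
  have deriv_h: "(h has_real_derivative f' z - f' y) (at z)" if "z \<in> S" "z \<noteq> p" for z
    unfolding h_def using deriv[OF that] by (auto intro!: derivative_eq_intros)
  have "h y \<le> h x"
  proof (cases "y \<le> x")
    case True
    show ?thesis
    proof (rule DERIV_nonneg_imp_increasing_except[OF True cont_h[OF xy(2,1)], of p])
      fix z assume z: "y < z" "z < x" "z \<noteq> p"
      then have "z \<in> S" using sub[OF xy(2,1)] by auto
      then show "(h has_real_derivative f' z - f' y) (at z) \<and> 0 \<le> f' z - f' y"
        using deriv_h[of z] mono[of y z] z xy by auto
    qed
  next
    case False
    have "- h x \<le> - h y"
    proof (rule DERIV_nonneg_imp_increasing_except[of x y _ p "\<lambda>z. - (f' z - f' y)"])
      show "x \<le> y" using False by simp
      show "continuous_on {x..y} (\<lambda>z. - h z)" using cont_h[OF xy] by (rule continuous_on_minus)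
      fix z assume z: "x < z" "z < y" "z \<noteq> p"
      then have "z \<in> S" using sub[OF xy] by auto
      then show "((\<lambda>z. - h z) has_real_derivative - (f' z - f' y)) (at z) \<and> 0 \<le> - (f' z - f' y)"
        using DERIV_minus[OF deriv_h[of z]] mono[of z y] z xy by auto
    qed
    then show ?thesis by simp
  qed
  then show ?thesis unfolding h_def by (simp add: algebra_simps)
qed

section \<open>Perspectives and their envelope\<close>

lemma recF_eventually_affine:
  assumes affine: "\<forall>\<^sub>F x in at_top. F x = ereal (k + m * x)" and r: "0 < r"
  shows "recF F r = ereal (m * r)"
  unfolding recF_def
proof (rule tendsto_Lim)
  have "((\<lambda>\<alpha>. (k + m) * inverse \<alpha> + m * r) \<longlongrightarrow> (k + m) * 0 + m * r) at_top"
    by (intro tendsto_intros tendsto_inverse_0_at_top filterlim_ident)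
  then have lim: "((\<lambda>\<alpha>. ereal ((k + m) * inverse \<alpha> + m * r)) \<longlongrightarrow> ereal (m * r)) at_top"
    by (intro tendsto_ereal) simp
  have "filterlim (\<lambda>\<alpha>. 1 + \<alpha> * r) at_top at_top"
    using r by (intro filterlim_tendsto_add_at_top[OF tendsto_const]
        filterlim_at_top_mult_tendsto_pos[OF tendsto_const] filterlim_ident)
  then have "\<forall>\<^sub>F \<alpha> in at_top. F (1 + \<alpha> * r) = ereal (k + m * (1 + \<alpha> * r))"
    using affine by (rule filterlim_iff[THEN iffD1, rule_format])
  with eventually_gt_at_top[of 0]
  have "\<forall>\<^sub>F \<alpha> in at_top. ereal ((k + m) * inverse \<alpha> + m * r) = F (1 + \<alpha> * r) / ereal \<alpha>"
  proof eventually_elim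
    case (elim \<alpha>)
    then have "(k + m * (1 + \<alpha> * r)) / \<alpha> = (k + m) * inverse \<alpha> + m * r"
      by (simp add: field_simps)
    with elim show ?case by simp
  qed
  with lim show "((\<lambda>\<alpha>. F (1 + \<alpha> * r) / ereal \<alpha>) \<longlongrightarrow> ereal (m * r)) at_top"
    by (rule Lim_transform_eventually)
qed simp

lemma HF_eq_linear_minorant:
  assumes minorant: "\<And>r1 r2. 0 \<le> r1 \<Longrightarrow> 0 \<le> r2 \<Longrightarrow> ereal (r1 * \<alpha> + r2 * \<beta>) \<le> tildeH F (r1, r2)"
    and attained: "tildeH F (s1, s2) = ereal (s1 * \<alpha> + s2 * \<beta>)"
  shows "HF F s1 s2 = ereal (s1 * \<alpha> + s2 * \<beta>)"
proof -
  let ?S = "{0::real..} \<times> {0::real..}"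
  let ?l = "\<lambda>p. fst p * \<alpha> + snd p * \<beta>"
  have "(?l \<longlongrightarrow> ?l (s1, s2)) (at (s1, s2) within ?S)"
    by (intro tendsto_intros tendsto_ident_at)
  then have lim: "((\<lambda>p. ereal (?l p)) \<longlongrightarrow> ereal (s1 * \<alpha> + s2 * \<beta>)) (at (s1, s2) within ?S)"
    by (intro tendsto_ereal) simp
  have "ereal (s1 * \<alpha> + s2 * \<beta>) \<le> Liminf (at (s1, s2) within ?S) (tildeH F)"
    unfolding le_Liminf_iff
  proof (intro allI impI)
    fix z assume "z < ereal (s1 * \<alpha> + s2 * \<beta>)"
    with lim have "\<forall>\<^sub>F p in at (s1, s2) within ?S. z < ereal (?l p)"
      by (rule order_tendstoD(1))
    moreover have "\<forall>\<^sub>F p in at (s1, s2) within ?S. p \<in> ?S"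
      by (simp add: eventually_at_filter)
    ultimately show "\<forall>\<^sub>F p in at (s1, s2) within ?S. z < tildeH F p"
    proof eventually_elim
      case (elim p)
      then obtain r1 r2 where p: "p = (r1, r2)" "0 \<le> r1" "0 \<le> r2" by auto
      show ?case using less_le_trans[OF _ minorant[OF p(2,3)]] elim(1) p(1) by simp
    qed
  qed
  then show ?thesis unfolding HF_def attained by (rule min_absorb1)
qed

lemma Ta_cong_pos:
  assumes "\<And>x. 0 < x \<Longrightarrow> F x = G x"
  shows "Ta a F = Ta a G"
proof -
  have "recF F r = recF G r" if "0 < r" for r
  proof -
    have "\<forall>\<^sub>F \<alpha> in at_top. F (1 + \<alpha> * r) / ereal \<alpha> = G (1 + \<alpha> * r) / ereal \<alpha>"
      using eventually_gt_at_top[of 0] by eventually_elim (simp add: assms that add_pos_pos zero_less_mult_iff)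
    then have "(\<lambda>l. ((\<lambda>\<alpha>. F (1 + \<alpha> * r) / ereal \<alpha>) \<longlongrightarrow> l) at_top)
        = (\<lambda>l. ((\<lambda>\<alpha>. G (1 + \<alpha> * r) / ereal \<alpha>) \<longlongrightarrow> l) at_top)"
      by (intro ext tendsto_cong)
    then show ?thesis unfolding recF_def Topological_Spaces.Lim_def by (rule arg_cong[where f = The])
  qed
  then have "persp F r t = persp G r t" if "0 < r" for r t
    unfolding persp_def using assms that by simp
  then have "tildeH F = tildeH G"
    unfolding tildeH_def by (intro ext INF_cong) auto
  then show ?thesis unfolding Ta_def HF_def by simp
qed

section \<open>Tangents of the power function\<close>

definition gpow_deriv :: "real \<Rightarrow> real \<Rightarrow> real \<Rightarrow> real" where
  "gpow_deriv a c y = c * sgn_powr (1/a - 1) (1 - 1 / y powr a)"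

definition gpow_intercept :: "real \<Rightarrow> real \<Rightarrow> real \<Rightarrow> real" where
  "gpow_intercept a c y = gpow a c y - gpow_deriv a c y * y"

locale power_entropy =
  fixes a c :: real
  assumes a_pos: "0 < a" and a_le_1: "a \<le> 1" and c_pos: "0 < c"
begin

lemma powr_inverse_powr: "0 \<le> x \<Longrightarrow> (x powr (1/a)) powr a = x"
  using a_pos by (simp add: powr_powr)

lemma mem_endpoints_iff_powr:
  assumes "0 < b" "0 < y"
  shows "y \<in> {1/b..b} \<longleftrightarrow> y powr a \<in> {1 / b powr a..b powr a}"
proof -
  have "1/b \<le> y \<longleftrightarrow> (1/b) powr a \<le> y powr a"
    using assms a_pos by (intro powr_le_powr_iff[symmetric]) auto
  moreover have "y \<le> b \<longleftrightarrow> y powr a \<le> b powr a"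
    using assms a_pos by (intro powr_le_powr_iff[symmetric]) auto
  moreover have "(1/b) powr a = 1 / b powr a" using assms by (simp add: powr_divide)
  ultimately show ?thesis by simp
qed

lemma gpow_deriv_eq:
  assumes y: "0 < y"
  shows "gpow_deriv a c y = c * sgn (y powr a - 1) * \<bar>y powr a - 1\<bar> powr (1/a - 1) * y powr (a - 1)"
proof -
  let ?\<tau> = "y powr a"
  have \<tau>: "0 < ?\<tau>" using y by simp
  have "(?\<tau>) powr (1/a - 1) * y powr (a - 1) = y powr (a * (1/a - 1) + (a - 1))"
    using y by (simp add: powr_powr powr_add)
  also have "\<dots> = 1" using a_pos y by (simp add: field_simps)
  finally have inv: "y powr (a - 1) = 1 / ?\<tau> powr (1/a - 1)"
    using \<tau> by (simp add: field_simps)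
  have "1 - 1 / ?\<tau> = (?\<tau> - 1) / ?\<tau>" using \<tau> by (simp add: field_simps)
  then show ?thesis
    unfolding gpow_deriv_def sgn_powr_def inv using \<tau> y
    by (simp add: abs_divide powr_divide sgn_divide)
qed

lemma has_real_derivative_gpow:
  assumes y: "0 < y" "y \<noteq> 1"
  shows "(gpow a c has_real_derivative gpow_deriv a c y) (at y)"
proof -
  define s where "s = sgn (y powr a - 1)"
  have s_abs: "s * (y powr a - 1) = \<bar>y powr a - 1\<bar>"
    using y a_pos by (auto simp: s_def abs_sgn sgn_if)
  have near: "\<forall>\<^sub>F x in nhds y. gpow a c x = c * (s * (x powr a - 1)) powr (1/a)"
  proof (cases "y < 1")
    case True
    then have "s = -1" using y a_pos by (simp add: s_def powr01_less_one)
    have "\<forall>\<^sub>F x in nhds y. x \<in> {0<..<1}" using y True by (intro eventually_nhds_in_open) auto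
    then show ?thesis
    proof eventually_elim
      case (elim x)
      then have "x powr a < 1" using a_pos by (simp add: powr01_less_one)
      then show ?case using \<open>s = -1\<close> by (simp add: gpow_def)
    qed
  next
    case False
    then have "s = 1" using y a_pos by (simp add: s_def)
    have "\<forall>\<^sub>F x in nhds y. x \<in> {1<..}" using y False by (intro eventually_nhds_in_open) auto
    then show ?thesis
    proof eventually_elim
      case (elim x)
      then have "1 < x powr a" using a_pos by simp
      then show ?case using \<open>s = 1\<close> by (simp add: gpow_def)
    qed
  qed
  have pos: "0 < s * (y powr a - 1)" using s_abs y a_pos by simp
  have "((\<lambda>x. c * (s * (x powr a - 1)) powr (1/a)) has_real_derivative
      c * ((1/a) * (s * (y powr a - 1)) powr (1/a - 1) * (s * (a * y powr (a - 1))))) (at y)"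
    using pos y by (auto intro!: derivative_eq_intros)
  also have "c * ((1/a) * (s * (y powr a - 1)) powr (1/a - 1) * (s * (a * y powr (a - 1))))
      = gpow_deriv a c y"
    unfolding gpow_deriv_eq[OF y(1)] s_abs using a_pos by (simp add: s_def)
  finally show ?thesis using DERIV_cong_ev[OF refl near refl] by simp
qed

lemma continuous_on_gpow: "continuous_on {0<..} (gpow a c)"
  unfolding gpow_def using a_pos
  by (intro continuous_intros continuous_on_powr') (auto intro!: continuous_intros)

lemma gpow_deriv_mono:
  assumes "0 < y" "y \<le> z"
  shows "gpow_deriv a c y \<le> gpow_deriv a c z"
proof -
  have "y powr a \<le> z powr a" using assms a_pos by (simp add: powr_mono2)
  then have "1 - 1 / y powr a \<le> 1 - 1 / z powr a" using assms by (simp add: frac_le)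
  then show ?thesis
    unfolding gpow_deriv_def using a_pos a_le_1 c_pos by (simp add: sgn_powr_mono)
qed

lemma gpow_above_tangent:
  assumes "0 < x" "0 < y"
  shows "gpow a c y + gpow_deriv a c y * (x - y) \<le> gpow a c x"
  using assms
  by (intro mono_deriv_imp_above_tangent[of "{0<..}" _ 1])
     (auto simp: is_interval_1 continuous_on_gpow has_real_derivative_gpow gpow_deriv_mono)

lemma gpow_intercept_eq:
  assumes y: "0 < y"
  shows "gpow_intercept a c y = - c * sgn_powr (1/a - 1) (y powr a - 1)"
proof -
  define u where "u = y powr a - 1"
  have tangent_at_y: "y powr (a - 1) * y = u + 1" using powr_add[of y "a - 1" 1] y by (simp add: u_def)
  have split: "\<bar>u\<bar> powr (1/a) = \<bar>u\<bar> powr (1/a - 1) * \<bar>u\<bar>"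
    using powr_add[of "\<bar>u\<bar>" "1/a - 1" 1] by simp
  have sgn_u: "\<bar>u\<bar> - sgn u * u = 0" by (cases u "0::real" rule: linorder_cases) auto
  have "gpow_intercept a c y
      = c * \<bar>u\<bar> powr (1/a) - c * sgn u * \<bar>u\<bar> powr (1/a - 1) * (y powr (a - 1) * y)"
    using y by (simp add: gpow_intercept_def gpow_def gpow_deriv_eq u_def mult.assoc)
  also have "\<dots> = c * \<bar>u\<bar> powr (1/a - 1) * (\<bar>u\<bar> - sgn u * u) - c * sgn u * \<bar>u\<bar> powr (1/a - 1)"
    unfolding split tangent_at_y by (simp add: algebra_simps)
  finally have "gpow_intercept a c y = - c * (sgn u * \<bar>u\<bar> powr (1/a - 1))"
    unfolding sgn_u by simp
  then show ?thesis by (simp add: sgn_powr_def u_def)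
qed

lemma gpow_deriv_inverse:
  assumes "0 < y"
  shows "gpow_deriv a c (1 / y) = gpow_intercept a c y"
  using assms sgn_powr_minus[of "1/a - 1" "y powr a - 1"]
  by (simp add: gpow_deriv_def gpow_intercept_eq powr_divide)

lemma gpow_intercept_inverse:
  assumes "0 < y"
  shows "gpow_intercept a c (1 / y) = gpow_deriv a c y"
  using assms sgn_powr_minus[of "1/a - 1" "1 - 1 / y powr a"]
  by (simp add: gpow_deriv_def gpow_intercept_eq powr_divide)

lemma gpow_inverse:
  assumes "0 < y"
  shows "gpow a c (1 / y) = gpow a c y / y"
proof -
  have "gpow a c (1 / y) = gpow_intercept a c (1 / y) + gpow_deriv a c (1 / y) / y"
    by (simp add: gpow_intercept_def)
  also have "\<dots> = (gpow_deriv a c y * y + gpow_intercept a c y) / y"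
    using assms by (simp add: gpow_deriv_inverse gpow_intercept_inverse field_simps)
  finally show ?thesis by (simp add: gpow_intercept_def)
qed

lemma gpow_deriv_midpoint:
  assumes "0 < t" "0 < \<theta>" and \<theta>: "\<theta> powr a = (1 + t powr a) / 2"
  shows "gpow_deriv a c \<theta> + gpow_deriv a c (\<theta> / t) = 0"
proof -
  have "0 < 1 + t powr a" by (simp add: add_pos_nonneg)
  then have reflect: "1 - 1 / (\<theta> / t) powr a = - (1 - 1 / \<theta> powr a)"
    using assms by (simp add: powr_divide \<theta> field_simps)
  show ?thesis unfolding gpow_deriv_def reflect sgn_powr_minus by simp
qed

lemma gpow_intercept_midpoint:
  assumes t: "0 < t" and \<theta>_pos: "0 < \<theta>" and \<theta>: "\<theta> powr a = (1 + t powr a) / 2"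
  shows "2 powr (1/a - 1) * (gpow_intercept a c \<theta> + t * gpow_intercept a c (\<theta> / t)) = gpow a c t"
proof -
  define \<tau> q u where "\<tau> = t powr a" and "q = 1/a - 1" and "u = (\<tau> - 1) / 2"
  have \<tau>: "0 < \<tau>" using t by (simp add: \<tau>_def)
  have t_\<tau>: "t = \<tau> powr (1/a)" using t a_pos by (simp add: \<tau>_def powr_powr)
  have \<theta>_u: "\<theta> powr a - 1 = u" using \<theta> by (simp add: u_def \<tau>_def field_simps)
  have "(\<theta> / t) powr a = (1 + \<tau>) / (2 * \<tau>)"
    unfolding powr_divide \<theta> \<tau>_def by simp
  then have \<theta>t_u: "(\<theta> / t) powr a - 1 = (1 / \<tau>) * - u"
    using \<tau> by (simp add: u_def field_simps)
  have t_scale: "t * (1 / \<tau>) powr q = \<tau>"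
    using \<tau> by (simp add: t_\<tau> powr_divide q_def flip: powr_diff)
  have "t * gpow_intercept a c (\<theta> / t) = - c * (t * sgn_powr q ((1 / \<tau>) * - u))"
    using \<theta>_pos t by (simp add: gpow_intercept_eq \<theta>t_u q_def)
  also have "\<dots> = c * (t * (1 / \<tau>) powr q) * sgn_powr q u"
    using sgn_powr_scale[of "1 / \<tau>" q "- u"] \<tau> by simp
  finally have right: "t * gpow_intercept a c (\<theta> / t) = c * \<tau> * sgn_powr q u"
    unfolding t_scale .
  have left: "gpow_intercept a c \<theta> = - c * sgn_powr q u"
    using \<theta>_pos by (simp add: gpow_intercept_eq \<theta>_u q_def)
  have "\<tau> = 2 * u + 1" by (simp add: u_def field_simps)
  then have "gpow_intercept a c \<theta> + t * gpow_intercept a c (\<theta> / t) = 2 * c * (sgn_powr q u * u)"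
    unfolding left right by (simp add: algebra_simps)
  then have "2 powr q * (gpow_intercept a c \<theta> + t * gpow_intercept a c (\<theta> / t))
      = c * ((2 powr q * 2) * \<bar>u\<bar> powr (1/a))"
    by (simp add: sgn_powr_mult_self q_def)
  also have "2 powr q * 2 = 2 powr (1/a)"
    using powr_add[of 2 q 1] by (simp add: q_def)
  also have "2 powr (1/a) * \<bar>u\<bar> powr (1/a) = \<bar>t powr a - 1\<bar> powr (1/a)"
    by (simp add: u_def \<tau>_def powr_mult[symmetric] abs_mult[symmetric])
  finally show ?thesis by (simp add: q_def gpow_def)
qed

end

section \<open>One step of the iteration\<close>

text \<open>At r = 0 this is the recession function of Flow, which beyond b is affine of slope
  gpow_deriv a c b.\<close>
definition Flow_persp :: "real \<Rightarrow> real \<Rightarrow> real \<Rightarrow> real \<Rightarrow> real \<Rightarrow> real" where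
  "Flow_persp a b c \<theta> r = (if 0 < r then r * Flow a b c (\<theta> / r) else gpow_deriv a c b * \<theta>)"

text \<open>The tangents of gpow at y0 and y1 support Flow, and their slopes cancel, so
  r1 * intercept y0 + r2 * intercept y1 minorizes tildeH at (r1, r2); theta attains it at (1, t).\<close>
definition tangent_certificate :: "real \<Rightarrow> real \<Rightarrow> real \<Rightarrow> real \<Rightarrow> real \<Rightarrow> real \<Rightarrow> real \<Rightarrow> bool" where
  "tangent_certificate a b c t y0 y1 \<theta> \<longleftrightarrow>
     y0 \<in> {1/b..b} \<and> y1 \<in> {1/b..b} \<and> gpow_deriv a c y0 + gpow_deriv a c y1 = 0 \<and> 0 < \<theta> \<and>
     Flow_persp a b c \<theta> 1 + Flow_persp a b c \<theta> t = gpow_intercept a c y0 + t * gpow_intercept a c y1"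

definition next_endpoint :: "real \<Rightarrow> real \<Rightarrow> real" where
  "next_endpoint a b = (2 * b powr a - 1) powr (1/a)"

context power_entropy
begin

lemma kappa_eq:
  assumes "1 < b"
  shows "kappa a b c = gpow_deriv a c b"
proof -
  have deriv: "(gpow a c has_real_derivative gpow_deriv a c b) (at_left b)"
    using has_real_derivative_gpow[of b] assms by (auto intro: has_field_derivative_at_within)
  show ?thesis unfolding kappa_def
    by (rule the_equality[where P = "\<lambda>k. (gpow a c has_real_derivative k) (at_left b)", OF deriv])
       (use deriv has_field_derivative_unique trivial_limit_at_left_real in blast)
qed

lemma Flow_right:
  assumes "1 < b" "b \<le> x"
  shows "Flow a b c x = gpow_intercept a c b + gpow_deriv a c b * x"
  using assms by (simp add: Flow_def Fup_def kappa_eq gpow_intercept_def algebra_simps)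

lemma Flow_middle:
  assumes "1 < b" "1/b \<le> x" "x \<le> b"
  shows "Flow a b c x = gpow a c x"
  using assms Flow_right[of b b] by (cases "x = b") (auto simp: Flow_def gpow_intercept_def)

lemma Flow_zero:
  assumes b: "1 < b"
  shows "Flow a b c 0 = gpow_deriv a c b"
proof -
  have "((\<lambda>t. t * gpow_intercept a c b + gpow_deriv a c b) \<longlongrightarrow> 0 * gpow_intercept a c b + gpow_deriv a c b)
      (at_right 0)"
    by (intro tendsto_intros)
  moreover have "\<forall>\<^sub>F t in at_right 0. t * gpow_intercept a c b + gpow_deriv a c b = t * Fup a b c (1 / t)"
    using b by (simp add: eventually_at_filter Fup_def kappa_eq gpow_intercept_def algebra_simps)
  ultimately have "((\<lambda>t. t * Fup a b c (1 / t)) \<longlongrightarrow> gpow_deriv a c b) (at_right 0)"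
    by (simp add: Lim_transform_eventually)
  then show ?thesis using b by (simp add: Flow_def tendsto_Lim)
qed

lemma Flow_inverse:
  assumes b: "1 < b" and x: "0 < x"
  shows "Flow a b c x = x * Flow a b c (1 / x)"
proof -
  have left: "Flow a b c x = x * Flow a b c (1 / x)" if "0 < x" "x < 1/b" for x
  proof -
    have "1/b < 1" using b by simp
    then have "x < b" using that b by linarith
    moreover have "b < 1 / x" using that b by (simp add: field_simps)
    ultimately show ?thesis using that Flow_right[OF b, of "1/x"] by (simp add: Flow_def Fup_def kappa_eq[OF b])
  qed
  consider "x < 1/b" | "1/b \<le> x" "x \<le> b" | "b < x" by linarith
  then show ?thesis
  proof cases
    case 2
    moreover have "1/b \<le> 1/x" "1/x \<le> b" using 2 x b by (auto simp: field_simps)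
    ultimately show ?thesis using x by (simp add: Flow_middle[OF b] gpow_inverse)
  next
    case 3
    then have "1/x < 1/b" using b by (simp add: frac_less2)
    then show ?thesis using left[of "1/x"] x by simp
  qed (use left x in blast)
qed

lemma Flow_above_tangent:
  assumes b: "1 < b" and y: "y \<in> {1/b..b}" and x: "0 < x"
  shows "gpow_intercept a c y + gpow_deriv a c y * x \<le> Flow a b c x"
proof -
  have right: "gpow_intercept a c y + gpow_deriv a c y * x \<le> Flow a b c x"
    if "0 < y" "y \<le> b" "b \<le> x" for x y
  proof -
    have "gpow a c y + gpow_deriv a c y * (b - y) \<le> gpow a c b"
      using gpow_above_tangent[of b y] that b by simp
    moreover have "gpow_deriv a c y * (x - b) \<le> gpow_deriv a c b * (x - b)"
      using gpow_deriv_mono[of y b] that by (simp add: mult_right_mono)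
    ultimately show ?thesis
      using that b by (simp add: Flow_right gpow_intercept_def algebra_simps)
  qed
  have y_pos: "0 < y" using y b by (auto intro: less_le_trans[of 0 "1/b"])
  consider "b \<le> x" | "1/b \<le> x" "x \<le> b" | "x < 1/b" by linarith
  then show ?thesis
  proof cases
    case 1
    then show ?thesis using right y_pos y by simp
  next
    case 2
    then show ?thesis
      using gpow_above_tangent[OF x y_pos] by (simp add: Flow_middle[OF b] gpow_intercept_def algebra_simps)
  next
    case 3
    have "0 < 1/y" "1/y \<le> b" "b \<le> 1/x" using 3 y y_pos x b by (auto simp: field_simps)
    then have "gpow_deriv a c y + gpow_intercept a c y * (1/x) \<le> Flow a b c (1/x)"
      using right[of "1/y" "1/x"] y_pos by (simp add: gpow_deriv_inverse gpow_intercept_inverse)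
    then have "x * (gpow_deriv a c y + gpow_intercept a c y * (1/x)) \<le> x * Flow a b c (1/x)"
      using x by (simp add: mult_left_mono)
    then show ?thesis using x by (simp add: Flow_inverse[OF b x] algebra_simps)
  qed
qed

lemma persp_Flow:
  assumes b: "1 < b" and "0 < \<theta>" "0 \<le> r"
  shows "persp (\<lambda>x. ereal (Flow a b c x)) \<theta> r = ereal (Flow_persp a b c \<theta> r)"
proof -
  have "\<forall>\<^sub>F x in at_top. ereal (Flow a b c x) = ereal (gpow_intercept a c b + gpow_deriv a c b * x)"
    using eventually_ge_at_top[of b] by eventually_elim (simp add: Flow_right[OF b])
  then show ?thesis
    using assms recF_eventually_affine by (auto simp: persp_def Flow_persp_def mult.commute)
qed

lemma Flow_persp_above_tangent:
  assumes b: "1 < b" and y: "y \<in> {1/b..b}" and "0 < \<theta>" "0 \<le> r"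
  shows "r * gpow_intercept a c y + gpow_deriv a c y * \<theta> \<le> Flow_persp a b c \<theta> r"
proof (cases "r = 0")
  case True
  have "0 < y" using y b by (auto intro: less_le_trans[of 0 "1/b"])
  then show ?thesis
    using True assms gpow_deriv_mono[of y b] by (simp add: Flow_persp_def mult_right_mono)
next
  case False
  then have r: "0 < r" using assms by simp
  have "gpow_intercept a c y + gpow_deriv a c y * (\<theta> / r) \<le> Flow a b c (\<theta> / r)"
    by (rule Flow_above_tangent[OF b y]) (use r assms in simp)
  then have "r * (gpow_intercept a c y + gpow_deriv a c y * (\<theta> / r)) \<le> r * Flow a b c (\<theta> / r)"
    using r by (simp add: mult_left_mono)
  then show ?thesis using r by (simp add: Flow_persp_def algebra_simps)
qed

lemma Flow_persp_scale:
  "0 < l \<Longrightarrow> Flow_persp a b c (l * \<theta>) (l * r) = l * Flow_persp a b c \<theta> r"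
  by (simp add: Flow_persp_def zero_less_mult_iff)

lemma tildeH_Flow_ge:
  assumes b: "1 < b" and y: "y0 \<in> {1/b..b}" "y1 \<in> {1/b..b}"
    and slopes: "gpow_deriv a c y0 + gpow_deriv a c y1 = 0" and r: "0 \<le> r1" "0 \<le> r2"
  shows "ereal (r1 * gpow_intercept a c y0 + r2 * gpow_intercept a c y1)
    \<le> tildeH (\<lambda>x. ereal (Flow a b c x)) (r1, r2)"
  unfolding tildeH_def
proof (rule INF_greatest)
  fix \<theta> :: real assume "\<theta> \<in> {0<..}"
  then have \<theta>: "0 < \<theta>" by simp
  have "r1 * gpow_intercept a c y0 + r2 * gpow_intercept a c y1
      + (gpow_deriv a c y0 + gpow_deriv a c y1) * \<theta>
      \<le> Flow_persp a b c \<theta> r1 + Flow_persp a b c \<theta> r2"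
    using Flow_persp_above_tangent[OF b y(1) \<theta> r(1)] Flow_persp_above_tangent[OF b y(2) \<theta> r(2)]
    by (simp add: algebra_simps)
  then show "ereal (r1 * gpow_intercept a c y0 + r2 * gpow_intercept a c y1)
      \<le> persp (\<lambda>x. ereal (Flow a b c x)) \<theta> (fst (r1, r2))
        + persp (\<lambda>x. ereal (Flow a b c x)) \<theta> (snd (r1, r2))"
    using slopes by (simp add: persp_Flow[OF b \<theta>] r)
qed

lemma HF_Flow:
  assumes b: "1 < b" and cert: "tangent_certificate a b c t y0 y1 \<theta>" and t: "0 \<le> t"
  shows "HF (\<lambda>x. ereal (Flow a b c x)) 1 t = ereal (gpow_intercept a c y0 + t * gpow_intercept a c y1)"
proof -
  note cert' = cert[unfolded tangent_certificate_def]
  let ?F = "\<lambda>x. ereal (Flow a b c x)"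
  have minorant: "ereal (r1 * gpow_intercept a c y0 + r2 * gpow_intercept a c y1) \<le> tildeH ?F (r1, r2)"
    if "0 \<le> r1" "0 \<le> r2" for r1 r2
    using tildeH_Flow_ge[OF b _ _ _ that] cert' by blast
  have "tildeH ?F (1, t) \<le> persp ?F \<theta> 1 + persp ?F \<theta> t"
    unfolding tildeH_def using cert' by (intro INF_lower2[of \<theta>]) auto
  also have "\<dots> = ereal (gpow_intercept a c y0 + t * gpow_intercept a c y1)"
    using cert' t by (simp add: persp_Flow[OF b])
  finally have "tildeH ?F (1, t) = ereal (1 * gpow_intercept a c y0 + t * gpow_intercept a c y1)"
    using minorant[of 1 t] t by simp
  from HF_eq_linear_minorant[OF minorant this] show ?thesis by simp
qed

lemma next_endpoint_powr:
  assumes "1 < b"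
  shows "next_endpoint a b powr a = 2 * b powr a - 1"
proof -
  have "1 < b powr a" using assms a_pos by simp
  then show ?thesis by (simp add: next_endpoint_def powr_inverse_powr)
qed

lemma next_endpoint_gt:
  assumes "1 < b"
  shows "b < next_endpoint a b"
proof (rule powr_less_cancel2[OF a_pos])
  have B: "1 < b powr a" using assms a_pos by simp
  then show "b powr a < next_endpoint a b powr a" using assms by (simp add: next_endpoint_powr)
  show "0 < next_endpoint a b" using B by (simp add: next_endpoint_def)
qed (use assms in simp)

lemma next_endpoint_tangents:
  assumes b: "1 < b"
  defines "b' \<equiv> next_endpoint a b"
  shows "b / b' \<in> {1/b..b}" and "gpow_deriv a c b + gpow_deriv a c (b / b') = 0"
    and "2 powr (1/a - 1) * gpow_intercept a c b = gpow_intercept a c b'"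
    and "2 powr (1/a - 1) * gpow_intercept a c (b / b') = gpow_deriv a c b'"
proof -
  define B q where "B = b powr a" and "q = 1/a - 1"
  have B: "1 < B" using b a_pos by (simp add: B_def)
  have b': "1 < b'" "b' powr a = 2 * B - 1"
    using next_endpoint_gt[OF b] next_endpoint_powr[OF b] b by (simp_all add: b'_def B_def)
  have double_sgn_powr: "sgn_powr q (2 * u) = 2 powr q * sgn_powr q u" for u
    by (rule sgn_powr_scale) simp
  have b_pos: "0 < b" and b'_pos: "0 < b'" using b b' by simp_all
  have y: "0 < b / b'" "(b / b') powr a = B / (2 * B - 1)"
    using b b' by (simp_all add: powr_divide B_def)
  have "2 * B - 1 \<le> B * B" using zero_le_square[of "B - 1"] by (simp add: algebra_simps)
  then have "1 / B \<le> B / (2 * B - 1)" "B / (2 * B - 1) \<le> B" using B by (simp_all add: field_simps)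
  then show "b / b' \<in> {1/b..b}" using mem_endpoints_iff_powr[OF _ y(1)] b y(2) by (simp add: B_def)
  have reflect: "1 - 1 / (b / b') powr a = - (1 - 1 / b powr a)"
    using B by (simp add: y(2) B_def[symmetric] field_simps)
  show "gpow_deriv a c b + gpow_deriv a c (b / b') = 0"
    unfolding gpow_deriv_def reflect sgn_powr_minus by simp
  have double: "b' powr a - 1 = 2 * (b powr a - 1)" using b'(2) by (simp add: B_def)
  show "2 powr (1/a - 1) * gpow_intercept a c b = gpow_intercept a c b'"
    unfolding gpow_intercept_eq[OF b_pos] gpow_intercept_eq[OF b'_pos] double
      q_def[symmetric] double_sgn_powr by simp
  have deriv_b': "1 - 1 / b' powr a = 2 * ((B - 1) / (2 * B - 1))"
    and intercept_y: "(b / b') powr a - 1 = - ((B - 1) / (2 * B - 1))"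
    using B by (simp_all add: b'(2) y(2) field_simps)
  show "2 powr (1/a - 1) * gpow_intercept a c (b / b') = gpow_deriv a c b'"
    unfolding gpow_deriv_def gpow_intercept_eq[OF y(1)] q_def[symmetric] deriv_b' intercept_y
      sgn_powr_minus double_sgn_powr
    by simp
qed

lemma midpoint_mem_endpoints:
  assumes b: "1 < b" and t: "1 \<le> t" "t \<le> next_endpoint a b"
    and \<theta>: "0 < \<theta>" "\<theta> powr a = (1 + t powr a) / 2"
  shows "\<theta> \<in> {1/b..b}" and "\<theta> / t \<in> {1/b..b}"
proof -
  define \<tau> B where "\<tau> = t powr a" and "B = b powr a"
  have B: "1 < B" using b a_pos by (simp add: B_def)
  have \<tau>: "1 \<le> \<tau>" "\<tau> \<le> 2 * B - 1"
    using t a_pos powr_mono2[of a t "next_endpoint a b"]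
    by (auto simp: \<tau>_def B_def ge_one_powr_ge_zero next_endpoint_powr[OF b])
  have \<theta>_t: "(\<theta> / t) powr a = (1 + \<tau>) / (2 * \<tau>)"
    unfolding powr_divide \<theta>(2) \<tau>_def by simp
  have "2 * \<tau> \<le> B * (1 + \<tau>)"
  proof (cases "2 \<le> B")
    case True
    then have "2 * \<tau> \<le> B * \<tau>" using \<tau> by (intro mult_right_mono) auto
    then show ?thesis using B by (simp add: algebra_simps)
  next
    case False
    have "\<tau> * (2 - B) \<le> (2 * B - 1) * (2 - B)" using \<tau> False by (intro mult_right_mono) auto
    then show ?thesis using zero_le_square[of "B - 1"] by (simp add: algebra_simps)
  qed
  then have "1 / B \<le> (1 + \<tau>) / (2 * \<tau>)" using B \<tau> by (simp add: field_simps)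
  moreover have "(1 + \<tau>) / (2 * \<tau>) \<le> 1" "1 / B \<le> 1" using B \<tau> by simp_all
  ultimately have "(\<theta> / t) powr a \<in> {1 / B..B}"
    unfolding \<theta>_t atLeastAtMost_iff using B by auto
  moreover have "1 \<le> (1 + \<tau>) / 2" "(1 + \<tau>) / 2 \<le> B" using \<tau> by auto
  then have "\<theta> powr a \<in> {1 / B..B}"
    unfolding \<theta>(2) \<tau>_def[symmetric] atLeastAtMost_iff using \<open>1 / B \<le> 1\<close> by (blast intro: order_trans)
  ultimately show "\<theta> \<in> {1/b..b}" "\<theta> / t \<in> {1/b..b}"
    using b \<theta>(1) t mem_endpoints_iff_powr[of b \<theta>] mem_endpoints_iff_powr[of b "\<theta> / t"]
    by (simp_all add: B_def)
qed

lemma tangent_certificate_middle: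
  assumes b: "1 < b" and t: "1 \<le> t" "t \<le> next_endpoint a b"
    and \<theta>_eq: "\<theta> = ((1 + t powr a) / 2) powr (1/a)"
  shows "tangent_certificate a b c t \<theta> (\<theta> / t) \<theta>"
    and "2 powr (1/a - 1) * (gpow_intercept a c \<theta> + t * gpow_intercept a c (\<theta> / t))
      = Flow a (next_endpoint a b) c t"
proof -
  have t_pos: "0 < t" using t by simp
  have "0 < 1 + t powr a" by (simp add: add_pos_nonneg)
  then have \<theta>: "0 < \<theta>" "\<theta> powr a = (1 + t powr a) / 2"
    by (simp_all add: \<theta>_eq powr_inverse_powr)
  note y = midpoint_mem_endpoints[OF b t \<theta>]
  have "Flow_persp a b c \<theta> 1 + Flow_persp a b c \<theta> t = gpow a c \<theta> + t * gpow a c (\<theta> / t)"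
    using y t_pos by (simp add: Flow_persp_def Flow_middle[OF b])
  also have "\<dots> = gpow_intercept a c \<theta> + t * gpow_intercept a c (\<theta> / t)
      + \<theta> * (gpow_deriv a c \<theta> + gpow_deriv a c (\<theta> / t))"
    using t_pos by (simp add: gpow_intercept_def algebra_simps)
  finally show "tangent_certificate a b c t \<theta> (\<theta> / t) \<theta>"
    unfolding tangent_certificate_def using y gpow_deriv_midpoint[OF t_pos \<theta>] \<theta> by simp
  have "1 / next_endpoint a b \<le> 1" using next_endpoint_gt[OF b] b by simp
  then have "1 / next_endpoint a b \<le> t" using t by linarith
  then show "2 powr (1/a - 1) * (gpow_intercept a c \<theta> + t * gpow_intercept a c (\<theta> / t))
      = Flow a (next_endpoint a b) c t"
    using next_endpoint_gt[OF b] b t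
    by (simp add: gpow_intercept_midpoint[OF t_pos \<theta>] Flow_middle)
qed

lemma tangent_certificate_right:
  assumes b: "1 < b" and t: "next_endpoint a b \<le> t"
  defines "b' \<equiv> next_endpoint a b"
  shows "tangent_certificate a b c t b (b / b') (b * t / b')"
    and "2 powr (1/a - 1) * (gpow_intercept a c b + t * gpow_intercept a c (b / b')) = Flow a b' c t"
proof -
  note tangents = next_endpoint_tangents[OF b, folded b'_def]
  have b': "b < b'" using next_endpoint_gt[OF b] by (simp add: b'_def)
  have t_pos: "0 < t" using b b' t by (simp add: b'_def)
  define \<theta> where "\<theta> = b * t / b'"
  have \<theta>: "0 < \<theta>" "b \<le> \<theta>" "\<theta> / t = b / b'" "t * (b / b') = \<theta>"
    using b b' t t_pos by (auto simp: \<theta>_def b'_def field_simps)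
  have "Flow_persp a b c \<theta> 1 + Flow_persp a b c \<theta> t
      = gpow_intercept a c b + gpow_deriv a c b * \<theta> + t * gpow a c (b / b')"
    using \<theta> t_pos tangents(1) b by (simp add: Flow_persp_def Flow_right Flow_middle)
  also have "\<dots> = gpow_intercept a c b + t * gpow_intercept a c (b / b')
      + \<theta> * (gpow_deriv a c b + gpow_deriv a c (b / b'))"
    using b b' by (simp add: \<theta>_def gpow_intercept_def field_simps)
  finally show "tangent_certificate a b c t b (b / b') (b * t / b')"
    unfolding tangent_certificate_def \<theta>_def[symmetric] using tangents \<theta> b by simp
  show "2 powr (1/a - 1) * (gpow_intercept a c b + t * gpow_intercept a c (b / b')) = Flow a b' c t"
    using tangents b b' t by (simp add: distrib_left Flow_right b'_def)
qed

lemma tangent_certificate_zero: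
  assumes b: "1 < b"
  defines "b' \<equiv> next_endpoint a b"
  shows "tangent_certificate a b c 0 (b / b') b (b / b')"
    and "2 powr (1/a - 1) * (gpow_intercept a c (b / b') + 0 * gpow_intercept a c b) = Flow a b' c 0"
proof -
  note tangents = next_endpoint_tangents[OF b, folded b'_def]
  have b': "1 < b'" using next_endpoint_gt[OF b] b by (simp add: b'_def)
  have "Flow_persp a b c (b / b') 1 + Flow_persp a b c (b / b') 0
      = gpow_intercept a c (b / b') + (gpow_deriv a c b + gpow_deriv a c (b / b')) * (b / b')"
    using tangents(1) b by (simp add: Flow_persp_def Flow_middle gpow_intercept_def algebra_simps)
  then show "tangent_certificate a b c 0 (b / b') b (b / b')"
    unfolding tangent_certificate_def using tangents b b' by (simp add: add.commute)
  show "2 powr (1/a - 1) * (gpow_intercept a c (b / b') + 0 * gpow_intercept a c b) = Flow a b' c 0"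
    using tangents b' by (simp add: Flow_zero)
qed

lemma tangent_certificate_inverse:
  assumes t: "0 < t" and cert: "tangent_certificate a b c (1 / t) y0 y1 \<theta>"
  shows "tangent_certificate a b c t y1 y0 (t * \<theta>)"
proof -
  have "Flow_persp a b c (t * \<theta>) 1 + Flow_persp a b c (t * \<theta>) t
      = t * (Flow_persp a b c \<theta> 1 + Flow_persp a b c \<theta> (1 / t))"
    using Flow_persp_scale[OF t, where b = b and \<theta> = \<theta> and r = "1 / t"]
      Flow_persp_scale[OF t, where b = b and \<theta> = \<theta> and r = 1] t
    by (simp add: algebra_simps)
  then show ?thesis
    using cert t unfolding tangent_certificate_def by (simp add: algebra_simps)
qed

lemma tangent_certificate_exists:
  assumes b: "1 < b" and t: "0 \<le> t"
  shows "\<exists>y0 y1 \<theta>. tangent_certificate a b c t y0 y1 \<theta> \<and>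
    2 powr (1/a - 1) * (gpow_intercept a c y0 + t * gpow_intercept a c y1) = Flow a (next_endpoint a b) c t"
    (is "\<exists>y0 y1 \<theta>. ?cert t y0 y1 \<theta>")
proof -
  have ge_1: "\<exists>y0 y1 \<theta>. ?cert s y0 y1 \<theta>" if "1 \<le> s" for s
  proof (cases "s \<le> next_endpoint a b")
    case True
    then show ?thesis using tangent_certificate_middle[OF b that True refl] by blast
  next
    case False
    then have "next_endpoint a b \<le> s" by simp
    then show ?thesis using tangent_certificate_right[OF b] by blast
  qed
  consider "t = 0" | "0 < t" "t < 1" | "1 \<le> t" using t by linarith
  then show ?thesis
  proof cases
    case 1
    then show ?thesis using tangent_certificate_zero[OF b] by blast
  next
    case 2
    then obtain y0 y1 \<theta> where cert: "tangent_certificate a b c (1 / t) y0 y1 \<theta>"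
      and val: "2 powr (1/a - 1) * (gpow_intercept a c y0 + 1 / t * gpow_intercept a c y1)
        = Flow a (next_endpoint a b) c (1 / t)"
      using ge_1[of "1 / t"] by auto
    have "2 powr (1/a - 1) * (gpow_intercept a c y1 + t * gpow_intercept a c y0)
        = t * (2 powr (1/a - 1) * (gpow_intercept a c y0 + 1 / t * gpow_intercept a c y1))"
      using 2 by (simp add: algebra_simps)
    also have "\<dots> = Flow a (next_endpoint a b) c t"
      using val 2 b next_endpoint_gt[OF b] by (simp add: Flow_inverse[of "next_endpoint a b" t])
    finally show ?thesis using tangent_certificate_inverse[OF 2(1) cert] by blast
  qed (use ge_1 in blast)
qed

lemma Ta_Flow:
  assumes "1 < b" "0 \<le> t"
  shows "Ta a (\<lambda>x. ereal (Flow a b c x)) t = ereal (Flow a (next_endpoint a b) c t)"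
proof -
  obtain y0 y1 \<theta> where "tangent_certificate a b c t y0 y1 \<theta>"
    and "2 powr (1/a - 1) * (gpow_intercept a c y0 + t * gpow_intercept a c y1)
      = Flow a (next_endpoint a b) c t"
    using tangent_certificate_exists[OF assms] by blast
  then show ?thesis using assms by (simp add: Ta_def HF_Flow)
qed

section \<open>Iteration\<close>

lemma next_endpoint_iterate:
  assumes "1 < b"
  shows "1 < (next_endpoint a ^^ n) b \<and> ((next_endpoint a ^^ n) b) powr a = 1 + 2 ^ n * (b powr a - 1)"
proof (induction n)
  case (Suc n)
  then show ?case
    using next_endpoint_gt[of "(next_endpoint a ^^ n) b"] next_endpoint_powr[of "(next_endpoint a ^^ n) b"]
    by (simp add: algebra_simps)
qed (use assms in simp)

lemma Ta_iterate_Flow: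
  assumes b: "1 < b" and x: "0 \<le> x"
  shows "(Ta a ^^ n) (\<lambda>x. ereal (Flow a b c x)) x = ereal (Flow a ((next_endpoint a ^^ n) b) c x)"
  using x
proof (induction n arbitrary: x)
  case (Suc n)
  have "Ta a ((Ta a ^^ n) (\<lambda>x. ereal (Flow a b c x)))
      = Ta a (\<lambda>x. ereal (Flow a ((next_endpoint a ^^ n) b) c x))"
    by (rule Ta_cong_pos) (simp add: Suc.IH)
  then show ?case using Ta_Flow next_endpoint_iterate[OF b] Suc.prems by simp
qed simp

lemma filterlim_next_endpoint_iterate:
  assumes b: "1 < b"
  shows "filterlim (\<lambda>n. (next_endpoint a ^^ n) b) at_top sequentially"
proof (rule filterlim_at_top_mono)
  define X where "X = b powr a - 1"
  have X: "0 < X" using b a_pos by (simp add: X_def)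
  show "filterlim (\<lambda>n. X * real n) at_top sequentially"
    by (rule filterlim_tendsto_pos_mult_at_top[OF tendsto_const X filterlim_real_sequentially])
  show "\<forall>\<^sub>F n in sequentially. X * real n \<le> (next_endpoint a ^^ n) b"
  proof (intro always_eventually allI)
    fix n
    have "X * real n \<le> X * 2 ^ n" using X by (simp add: less_imp_le)
    also have "\<dots> \<le> ((next_endpoint a ^^ n) b) powr a"
      using next_endpoint_iterate[OF b] by (simp add: X_def)
    also have "\<dots> \<le> ((next_endpoint a ^^ n) b) powr 1"
      using next_endpoint_iterate[OF b, of n] a_le_1 by (intro powr_mono) auto
    finally show "X * real n \<le> (next_endpoint a ^^ n) b"
      using next_endpoint_iterate[OF b, of n] by simp
  qed
qed

lemma Flow_tendsto_gpow:
  assumes \<beta>: "filterlim \<beta> at_top sequentially" "\<And>n. 1 < \<beta> n" and s: "0 \<le> s"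
  shows "(\<lambda>n. Flow a (\<beta> n) c s) \<longlonglongrightarrow> gpow a c s"
proof (cases "s = 0")
  case True
  have \<beta>_pos: "0 \<le> inverse (\<beta> n)" for n using \<beta>(2)[of n] by simp
  have "(\<lambda>n. inverse (\<beta> n)) \<longlonglongrightarrow> 0" by (rule tendsto_inverse_0_at_top[OF \<beta>(1)])
  then have "(\<lambda>n. inverse (\<beta> n) powr a) \<longlonglongrightarrow> 0"
    by (rule tendsto_zero_powrI[OF _ tendsto_const always_eventually]) (use \<beta>_pos a_pos in auto)
  then have "(\<lambda>n. c * (1 - inverse (\<beta> n) powr a) powr (1/a - 1)) \<longlonglongrightarrow> c * (1 - 0) powr (1/a - 1)"
    by (intro tendsto_intros) simp_all
  moreover have "Flow a (\<beta> n) c 0 = c * (1 - inverse (\<beta> n) powr a) powr (1/a - 1)" for n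
  proof -
    have "1 < \<beta> n powr a" using \<beta>(2)[of n] a_pos by simp
    then show ?thesis
      using \<beta>(2)[of n] by (simp add: Flow_zero gpow_deriv_def sgn_powr_pos inverse_eq_divide powr_divide)
  qed
  ultimately show ?thesis using True by (simp add: gpow_def tendsto_mult_left)
next
  case False
  then have s_pos: "0 < s" using s by simp
  have "\<forall>\<^sub>F n in sequentially. max s (1 / s) \<le> \<beta> n" using \<beta>(1) unfolding filterlim_at_top by blast
  then have "\<forall>\<^sub>F n in sequentially. Flow a (\<beta> n) c s = gpow a c s"
  proof eventually_elim
    case (elim n)
    then have "1 / \<beta> n \<le> s" "s \<le> \<beta> n" using s_pos \<beta>(2)[of n] by (auto simp: field_simps)
    then show ?case using \<beta>(2) by (simp add: Flow_middle)
  qed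
  then show ?thesis by (rule tendsto_eventually)
qed

end

theorem mainTheorem11:
  fixes a b c s :: real
  assumes "0 < a" "a \<le> 1" "b > 1" "c > 0" "s \<ge> 0"
  shows "(\<lambda>n. ((Ta a ^^ n) (\<lambda>x. ereal (Flow a b c x))) s)
           \<longlonglongrightarrow> ereal (c * \<bar>s powr a - 1\<bar> powr (1 / a))"
proof -
  interpret power_entropy a c using assms by unfold_locales
  have "(\<lambda>n. Flow a ((next_endpoint a ^^ n) b) c s) \<longlonglongrightarrow> gpow a c s"
    using assms next_endpoint_iterate filterlim_next_endpoint_iterate by (intro Flow_tendsto_gpow) auto
  then show ?thesis
    using assms by (simp add: Ta_iterate_Flow gpow_def)
qed

end
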